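(* Let $\Delta(v)=\alpha v+\beta$ with $\alpha,\beta\in\mathbb{R}$ such that $\Delta(v)>0$ for all $v\in[0,1]$, and let $u:[0,1]\to[0,1]$ be the power-law schedule with exponent $p=3/2$: $u(0)=0$, $u(1)=1$, $u'(s)=c\,\Delta^{3/2}(u(s))$ with $c=\int_0^1\Delta^{-3/2}(v)\,dv$. Then $\mathrm{sgn}(u'')$ is constant on $[0,1]$ and $u$ satisfies the Euler–Lagrange equation of $\mathcal{L}_1(s,u,p,q)=|q|/\Delta^2(u)$, namely for all $s\in[0,1]$ $$-\frac{2|u''(s)|\,\Delta'(u(s))}{\Delta^3(u(s))}+\frac{d^2}{ds^2}\left(\frac{\mathrm{sgn}(u''(s))}{\Delta^2(u(s))}\right)=0 .$$
   Context: $\mathrm{sgn}$ denotes the sign function with $\mathrm{sgn}(0)=0$; $\Delta'=d\Delta/dv$. The equation displayed is $\frac{\partial\mathcal{L}_1}{\partial u}-\frac{d}{ds}\frac{\partial \mathcal{L}_1}{\partial p}+\frac{d^2}{ds^2}\frac{\partial\mathcal{L}_1}{\partial q}=0$ evaluated along $(s,u(s),u'(s),u''(s))$, with $\partial|q|/\partial q=\mathrm{sgn}(q)$. *)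

theory Defs
  imports "HOL-Analysis.Analysis"
begin

definition Delta :: "real \<Rightarrow> real \<Rightarrow> real \<Rightarrow> real" where
  "Delta \<alpha> \<beta> v = \<alpha> * v + \<beta>"

end

theory Submission
  imports Defs
begin

text \<open>Along the schedule the gap \<open>D(s) = \<Delta>(u(s))\<close> solves the autonomous equation
  \<open>D' = \<alpha> c D^(3/2)\<close>, so each power \<open>D^r\<close> differentiates to \<open>r \<alpha> c D^(r+1/2)\<close>.
  Hence \<open>u'' = (3/2) \<alpha> c^2 D^2\<close> has the constant sign \<open>\<sigma> = sgn(\<alpha> c^2)\<close>, and
  \<open>sgn(u'')/D^2 = \<sigma> D^(-2)\<close> has second derivative \<open>3 \<sigma> \<alpha>^2 c^2 / D\<close>, which equals
  \<open>2 |u''| \<alpha> / D^3\<close> since \<open>\<sigma> \<alpha> c^2 = |\<alpha> c^2|\<close>. Neither the value of \<open>c\<close> nor the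
  boundary values of \<open>u\<close> are needed.\<close>

lemma has_real_derivative_powr_power_law:
  fixes f :: "real \<Rightarrow> real"
  assumes "(f has_real_derivative k * f s powr a) (at s within S)" and "f s > 0"
  shows "((\<lambda>t. C * f t powr r) has_real_derivative C * r * k * f s powr (r + a - 1)) (at s within S)"
proof -
  have "((\<lambda>t. f t powr r) has_real_derivative r * f s powr (r - 1) * (k * f s powr a)) (at s within S)"
    using DERIV_chain2[OF has_real_derivative_powr[OF assms(2)] assms(1)] by simp
  moreover have "f s powr (r - 1) * f s powr a = f s powr (r + a - 1)"
    by (simp add: powr_add[symmetric] algebra_simps)
  ultimately show ?thesis
    by (auto intro: DERIV_cong[OF DERIV_cmult] simp: algebra_simps)
qed

lemma three_halves_power_law_derivatives:
  fixes D :: "real \<Rightarrow> real"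
  assumes dD: "(D has_real_derivative \<alpha> * c * D s powr (3/2)) (at s within S)" and pos: "D s > 0"
  shows "((\<lambda>t. c * D t powr (3/2)) has_real_derivative 3/2 * \<alpha> * c^2 * (D s)^2) (at s within S)"
    and "((\<lambda>t. \<sigma> * D t powr (-2)) has_real_derivative -2 * \<sigma> * \<alpha> * c * D s powr (-3/2))
           (at s within S)"
    and "((\<lambda>t. -2 * \<sigma> * \<alpha> * c * D t powr (-3/2)) has_real_derivative 3 * \<sigma> * \<alpha>^2 * c^2 / D s)
           (at s within S)"
  using has_real_derivative_powr_power_law[OF dD pos, of c "3/2"]
    has_real_derivative_powr_power_law[OF dD pos, of \<sigma> "-2"]
    has_real_derivative_powr_power_law[OF dD pos, of "-2 * \<sigma> * \<alpha> * c" "-3/2"] pos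
  by (simp_all add: powr_neg_one power2_eq_square algebra_simps)

lemma has_real_derivative_Delta_comp:
  assumes "(u has_real_derivative u') (at s within S)"
  shows "((\<lambda>t. Delta \<alpha> \<beta> (u t)) has_real_derivative \<alpha> * u') (at s within S)"
  using assms unfolding Delta_def by (auto intro!: derivative_eq_intros)

lemma three_halves_euler_lagrange_residual:
  fixes \<alpha> c d :: real
  assumes "d > 0"
  shows "- 2 * \<bar>3/2 * \<alpha> * c^2 * d^2\<bar> * \<alpha> / d^3 + 3 * sgn (\<alpha> * c^2) * \<alpha>^2 * c^2 / d = 0"
proof -
  have "- 2 * \<bar>3/2 * \<alpha> * c^2 * d^2\<bar> * \<alpha> / d^3 = - 3 * (\<alpha> * \<bar>\<alpha> * c^2\<bar>) / d"
    using assms by (simp add: abs_mult power2_eq_square power3_eq_cube)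
  moreover have "3 * sgn (\<alpha> * c^2) * \<alpha>^2 * c^2 / d = 3 * (\<alpha> * \<bar>\<alpha> * c^2\<bar>) / d"
    by (simp add: abs_sgn power2_eq_square algebra_simps)
  ultimately show ?thesis
    by simp
qed

theorem theorem6:
  fixes \<alpha> \<beta> c :: real and u :: "real \<Rightarrow> real"
  assumes pos: "\<forall>v\<in>{0..1}. Delta \<alpha> \<beta> v > 0"
    and c_def: "c = integral {0..1} (\<lambda>v. Delta \<alpha> \<beta> v powr (-3/2))"
    and range: "u ` {0..1} \<subseteq> {0..1}"
    and u0: "u 0 = 0" and u1: "u 1 = 1"
    and ode: "\<forall>s\<in>{0..1}. (u has_real_derivative c * Delta \<alpha> \<beta> (u s) powr (3/2)) (at s within {0..1})"
  shows "\<exists>u' u'' w' w''.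
           (\<forall>s\<in>{0..1}.
              (u has_real_derivative u' s) (at s within {0..1}) \<and>
              (u' has_real_derivative u'' s) (at s within {0..1}) \<and>
              ((\<lambda>t. sgn (u'' t) / (Delta \<alpha> \<beta> (u t))^2) has_real_derivative w' s) (at s within {0..1}) \<and>
              (w' has_real_derivative w'' s) (at s within {0..1}) \<and>
              - 2 * \<bar>u'' s\<bar> * \<alpha> / (Delta \<alpha> \<beta> (u s))^3 + w'' s = 0) \<and>
           (\<exists>\<sigma>. \<forall>s\<in>{0..1}. sgn (u'' s) = \<sigma>)"
proof -
  define D where "D t = Delta \<alpha> \<beta> (u t)" for t
  define \<sigma> where "\<sigma> = sgn (\<alpha> * c^2)"
  define u'' where "u'' t = 3/2 * \<alpha> * c^2 * (D t)^2" for t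
  define w' where "w' t = -2 * \<sigma> * \<alpha> * c * D t powr (-3/2)" for t
  have D_pos: "D s > 0" if "s \<in> {0..1}" for s
    using pos range that unfolding D_def by (auto simp: image_subset_iff)
  have dD: "(D has_real_derivative \<alpha> * c * D s powr (3/2)) (at s within {0..1})"
    if "s \<in> {0..1}" for s
    using has_real_derivative_Delta_comp ode that unfolding D_def[abs_def] by (simp add: mult.assoc)
  have sgn_u'': "sgn (u'' s) = \<sigma>" if "s \<in> {0..1}" for s
    using D_pos[OF that] unfolding u''_def \<sigma>_def by (simp add: sgn_mult)
  have w_eq: "sgn (u'' t) / (D t)^2 = \<sigma> * D t powr (-2)" if "t \<in> {0..1}" for t
    using sgn_u''[OF that] D_pos[OF that] by (simp add: powr_minus powr_realpow divide_inverse)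
  show ?thesis
    unfolding D_def[symmetric]
  proof (intro exI conjI ballI)
    fix s :: real assume s: "s \<in> {0..1}"
    show "(u has_real_derivative c * D s powr (3/2)) (at s within {0..1})"
      using ode s unfolding D_def by blast
    show "((\<lambda>t. c * D t powr (3/2)) has_real_derivative u'' s) (at s within {0..1})"
      using three_halves_power_law_derivatives(1)[OF dD[OF s] D_pos[OF s]] unfolding u''_def .
    show "((\<lambda>t. sgn (u'' t) / (D t)^2) has_real_derivative w' s) (at s within {0..1})"
    proof (rule has_field_derivative_transform_within[OF _ zero_less_one s])
      show "((\<lambda>t. \<sigma> * D t powr (-2)) has_real_derivative w' s) (at s within {0..1})"
        using three_halves_power_law_derivatives(2)[OF dD[OF s] D_pos[OF s]] unfolding w'_def .
    qed (simp add: w_eq)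
    show "(w' has_real_derivative 3 * \<sigma> * \<alpha>^2 * c^2 / D s) (at s within {0..1})"
      using three_halves_power_law_derivatives(3)[OF dD[OF s] D_pos[OF s]] unfolding w'_def[abs_def] .
    show "- 2 * \<bar>u'' s\<bar> * \<alpha> / (D s)^3 + 3 * \<sigma> * \<alpha>^2 * c^2 / D s = 0"
      using three_halves_euler_lagrange_residual[OF D_pos[OF s]] unfolding u''_def \<sigma>_def .
  qed (rule sgn_u'')
qed

end
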